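(* Let $R$ be a commutative ring and $M$ an $R$-module. The following are equivalent: (1) $M$ is a coherent $R$-module (finitely generated, with every finitely generated submodule finitely presented); (2) $M$ is $u$-$(R\setminus\mathfrak p)$-coherent for every prime ideal $\mathfrak p$ of $R$; (3) $M$ is $u$-$(R\setminus\mathfrak m)$-coherent for every maximal ideal $\mathfrak m$ of $R$.
   Context: For a multiplicative subset $S$ of $R$ (containing $1$, closed under products): $M$ is $S$-finite with respect to $s\in S$ if there is a finitely generated submodule $F\subseteq M$ with $sM\subseteq F$; $M$ is $u$-$S$-finitely presented with respect to $s$ if there is an exact sequence $0\to T_1\to F\to M\to T_2\to 0$ with $F$ finitely presented and $sT_1=sT_2=0$; $M$ is $u$-$S$-coherent if there is $s\in S$ such that $M$ is $S$-finite with respect to $s$ and every finitely generated submodule of $M$ is $u$-$S$-finitely presented with respect to $s$. *)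

theory Defs
  imports Main "HOL.Modules" "HOL-Library.Function_Algebras"
begin

text \<open>Setting: R is a commutative ring (a type of class comm_ring_1), and the R-module M
  is the whole type 'b, with scalar multiplication sc, assumed to satisfy the module axioms.\<close>

definition ring_ideal :: "'a::comm_ring_1 set \<Rightarrow> bool" where
  "ring_ideal I \<longleftrightarrow> 0 \<in> I \<and> (\<forall>x\<in>I. \<forall>y\<in>I. x + y \<in> I) \<and> (\<forall>r. \<forall>x\<in>I. r * x \<in> I)"

definition prime_ideal :: "'a::comm_ring_1 set \<Rightarrow> bool" where
  "prime_ideal P \<longleftrightarrow> ring_ideal P \<and> P \<noteq> UNIV \<and> (\<forall>a b. a * b \<in> P \<longrightarrow> a \<in> P \<or> b \<in> P)"

definition maximal_ideal :: "'a::comm_ring_1 set \<Rightarrow> bool" where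
  "maximal_ideal m \<longleftrightarrow> ring_ideal m \<and> m \<noteq> UNIV \<and>
     (\<forall>J. ring_ideal J \<and> m \<subseteq> J \<longrightarrow> J = m \<or> J = UNIV)"

definition mspan :: "('a::comm_ring_1 \<Rightarrow> 'b::ab_group_add \<Rightarrow> 'b) \<Rightarrow> 'b set \<Rightarrow> 'b set" where
  "mspan sc B = {(\<Sum>a\<in>t. sc (r a) a) | t r. finite t \<and> t \<subseteq> B}"

definition fin_gen :: "('a::comm_ring_1 \<Rightarrow> 'b::ab_group_add \<Rightarrow> 'b) \<Rightarrow> 'b set \<Rightarrow> bool" where
  "fin_gen sc N \<longleftrightarrow> (\<exists>F. finite F \<and> F \<subseteq> N \<and> mspan sc F = N)"

text \<open>The free module R^n, represented as functions nat => R supported on {..<n},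
  with pointwise scalar multiplication.\<close>
definition fvec :: "nat \<Rightarrow> (nat \<Rightarrow> 'a::comm_ring_1) set" where
  "fvec n = {c. \<forall>i\<ge>n. c i = 0}"

definition fscale :: "'a::comm_ring_1 \<Rightarrow> (nat \<Rightarrow> 'a) \<Rightarrow> (nat \<Rightarrow> 'a)" where
  "fscale r c = (\<lambda>i. r * c i)"

definition lmap :: "('a::comm_ring_1 \<Rightarrow> 'b::ab_group_add \<Rightarrow> 'b) \<Rightarrow> nat \<Rightarrow> (nat \<Rightarrow> 'b) \<Rightarrow> (nat \<Rightarrow> 'a) \<Rightarrow> 'b" where
  "lmap sc n g c = (\<Sum>i<n. sc (c i) (g i))"

definition lker :: "('a::comm_ring_1 \<Rightarrow> 'b::ab_group_add \<Rightarrow> 'b) \<Rightarrow> nat \<Rightarrow> (nat \<Rightarrow> 'b) \<Rightarrow> (nat \<Rightarrow> 'a) set" where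
  "lker sc n g = {c \<in> fvec n. lmap sc n g c = 0}"

text \<open>Finitely presented submodule N: there is an exact sequence R^m -> R^n -> N -> 0,
  i.e. a surjection R^n -> N with finitely generated kernel.\<close>
definition fin_pres :: "('a::comm_ring_1 \<Rightarrow> 'b::ab_group_add \<Rightarrow> 'b) \<Rightarrow> 'b set \<Rightarrow> bool" where
  "fin_pres sc N \<longleftrightarrow> (\<exists>n g. (\<forall>i<n. g i \<in> N) \<and> lmap sc n g ` fvec n = N \<and>
      fin_gen fscale (lker sc n g))"

definition coherent :: "('a::comm_ring_1 \<Rightarrow> 'b::ab_group_add \<Rightarrow> 'b) \<Rightarrow> bool" where
  "coherent sc \<longleftrightarrow> fin_gen sc UNIV \<and> (\<forall>N. fin_gen sc N \<longrightarrow> fin_pres sc N)"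

definition S_finite_wrt :: "('a::comm_ring_1 \<Rightarrow> 'b::ab_group_add \<Rightarrow> 'b) \<Rightarrow> 'a \<Rightarrow> bool" where
  "S_finite_wrt sc s \<longleftrightarrow> (\<exists>F. fin_gen sc F \<and> (\<forall>x. sc s x \<in> F))"

text \<open>u-S-finitely presented w.r.t. s: an exact sequence 0 -> T1 -> F -> N -> T2 -> 0 with
  F finitely presented and s T1 = s T2 = 0.  Every finitely presented F is R^n/K with K a
  finitely generated submodule of R^n, and a map F -> N is a map g : R^n -> N vanishing
  on K; then T1 = ker g / K and T2 = N / im g.\<close>
definition uS_fin_pres_wrt :: "('a::comm_ring_1 \<Rightarrow> 'b::ab_group_add \<Rightarrow> 'b) \<Rightarrow> 'a \<Rightarrow> 'b set \<Rightarrow> bool" where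
  "uS_fin_pres_wrt sc s N \<longleftrightarrow> (\<exists>n g K. (\<forall>i<n. g i \<in> N) \<and>
      fin_gen fscale K \<and> K \<subseteq> lker sc n g \<and>
      (\<forall>c\<in>lker sc n g. fscale s c \<in> K) \<and>
      (\<forall>x\<in>N. sc s x \<in> lmap sc n g ` fvec n))"

definition uS_coherent :: "('a::comm_ring_1 \<Rightarrow> 'b::ab_group_add \<Rightarrow> 'b) \<Rightarrow> 'a set \<Rightarrow> bool" where
  "uS_coherent sc S \<longleftrightarrow> (\<exists>s\<in>S. S_finite_wrt sc s \<and>
      (\<forall>N. fin_gen sc N \<longrightarrow> uS_fin_pres_wrt sc s N))"

end

theory Submission
  imports Defs
begin

(* (1) implies (2) with s = 1, and (2) implies (3) because maximal ideals are prime.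
   (3) implies (1) is a local-global argument. For each maximal ideal m pick a witness
   s_m outside m. These witnesses lie in no maximal ideal, so 1 = u_1 s_1 + ... + u_r s_r
   for finitely many of them; hence a submodule V with s_i V inside the span of a finite
   L_i in V for each i is spanned by the union of the L_i. This applies to M itself and
   to the kernel of any finite generating family h of a finitely generated submodule N:
   comparing h with the u-S-presentation g of N, lifting g through h and s_m h through g,
   shows that s_m^2 (still outside the prime ideal m) times that kernel lies in a finitely
   generated submodule of it. *)

(* The ring acting on itself: its subspaces are the ideals, and R.span T is the ideal
   generated by T. *)
interpretation R: module "(*) :: 'a::comm_ring_1 \<Rightarrow> 'a \<Rightarrow> 'a"
  by unfold_locales (simp_all add: algebra_simps)

(* As a simp rule it would loop against mult.assoc from algebra_simps. *)
declare R.scale_scale [simp del]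

lemma ring_ideal_iff_subspace: "ring_ideal I \<longleftrightarrow> R.subspace I"
  unfolding ring_ideal_def R.subspace_def by blast

lemma ring_ideal_eq_UNIV_iff: "ring_ideal I \<Longrightarrow> I = UNIV \<longleftrightarrow> 1 \<in> I"
  unfolding ring_ideal_def by (metis UNIV_I UNIV_eq_I mult.right_neutral)

lemma maximal_ideal_imp_prime_ideal:
  assumes "maximal_ideal m"
  shows "prime_ideal m"
proof -
  have m: "R.subspace m" "m \<noteq> UNIV"
    and max: "\<And>J. R.subspace J \<Longrightarrow> m \<subseteq> J \<Longrightarrow> J = m \<or> J = UNIV"
    using assms unfolding maximal_ideal_def ring_ideal_iff_subspace by auto
  have "b \<in> m" if ab: "a * b \<in> m" and a: "a \<notin> m" for a b
  proof -
    have "R.span (insert a m) = UNIV"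
      using max[of "R.span (insert a m)"] R.span_superset[of "insert a m"] a by auto
    then obtain k where "1 - k * a \<in> m"
      using R.span_breakdown_eq[of 1 a m] R.span_minimal[OF subset_refl m(1)] by auto
    then have "b * (1 - k * a) + k * (a * b) \<in> m"
      using ab m(1) by (blast intro: R.subspace_add R.subspace_scale)
    then show "b \<in> m"
      by (simp add: algebra_simps)
  qed
  then show ?thesis
    using assms unfolding prime_ideal_def maximal_ideal_def by blast
qed

lemma one_notin_prime_ideal: "prime_ideal P \<Longrightarrow> 1 \<notin> P"
  unfolding prime_ideal_def using ring_ideal_eq_UNIV_iff by blast

lemma ex_maximal_ideal_superset:
  fixes I :: "'a::comm_ring_1 set"
  assumes "ring_ideal I" "I \<noteq> UNIV"
  obtains m where "maximal_ideal m" "I \<subseteq> m"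
proof -
  define \<A> where "\<A> = {J. ring_ideal J \<and> I \<subseteq> J \<and> (1::'a) \<notin> J}"
  have "\<Union>\<C> \<in> \<A>" if "\<C> \<noteq> {}" "subset.chain \<A> \<C>" for \<C>
  proof -
    have "\<C> \<subseteq> \<A>" and chain: "\<And>J J'. J \<in> \<C> \<Longrightarrow> J' \<in> \<C> \<Longrightarrow> J \<subseteq> J' \<or> J' \<subseteq> J"
      using that(2) unfolding subset_chain_def by auto
    then have \<C>: "\<And>J. J \<in> \<C> \<Longrightarrow> R.subspace J \<and> I \<subseteq> J \<and> 1 \<notin> J"
      unfolding \<A>_def ring_ideal_iff_subspace by blast
    have "R.subspace (\<Union>\<C>)"
    proof (rule R.subspaceI)
      obtain J where "J \<in> \<C>"
        using \<open>\<C> \<noteq> {}\<close> by blast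
      then show "0 \<in> \<Union>\<C>"
        using R.subspace_0 \<C> by blast
    next
      fix c x
      assume "x \<in> \<Union>\<C>"
      then obtain X where "x \<in> X" "X \<in> \<C>"
        by blast
      then show "c * x \<in> \<Union>\<C>"
        using R.subspace_scale[of X x c] \<C>[of X] by blast
    next
      fix x y
      assume "x \<in> \<Union>\<C>" "y \<in> \<Union>\<C>"
      then obtain X Y where XY: "x \<in> X" "X \<in> \<C>" "y \<in> Y" "Y \<in> \<C>"
        by blast
      then have "X \<union> Y \<in> \<C>"
        using chain[of X Y] by (metis sup.absorb1 sup.absorb2)
      then show "x + y \<in> \<Union>\<C>"
        using R.subspace_add[of "X \<union> Y" x y] \<C>[of "X \<union> Y"] XY by blast
    qed
    then show ?thesis
      using \<open>\<C> \<noteq> {}\<close> \<C> unfolding \<A>_def ring_ideal_iff_subspace by blast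
  qed
  moreover have "I \<in> \<A>"
    using assms ring_ideal_eq_UNIV_iff unfolding \<A>_def by blast
  ultimately obtain m where m: "m \<in> \<A>" "\<And>J. J \<in> \<A> \<Longrightarrow> m \<subseteq> J \<Longrightarrow> J = m"
    using subset_Zorn_nonempty[of \<A>] by blast
  have "maximal_ideal m"
    using m ring_ideal_eq_UNIV_iff unfolding maximal_ideal_def \<A>_def by blast
  with m(1) show ?thesis
    using that unfolding \<A>_def by blast
qed

lemma one_in_span_if_not_subset_maximal_ideal:
  fixes T :: "'a::comm_ring_1 set"
  assumes "\<And>m. maximal_ideal m \<Longrightarrow> \<not> T \<subseteq> m"
  shows "1 \<in> R.span T"
proof (rule ccontr)
  assume "1 \<notin> R.span T"
  then have "ring_ideal (R.span T)" "R.span T \<noteq> UNIV"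
    by (auto simp: ring_ideal_iff_subspace)
  then obtain m where "maximal_ideal m" "R.span T \<subseteq> m"
    by (rule ex_maximal_ideal_superset)
  then show False
    using assms R.span_superset by blast
qed

interpretation F: module "fscale :: 'a::comm_ring_1 \<Rightarrow> (nat \<Rightarrow> 'a) \<Rightarrow> _"
  by unfold_locales (auto simp: fscale_def algebra_simps)

lemma fscale_apply [simp]: "fscale r c i = r * c i"
  by (simp add: fscale_def)

lemma sum_fun_apply: "sum f A (i::nat) = (\<Sum>x\<in>A. f x i)"
  by (induction A rule: infinite_finite_induct) auto

lemma subspace_fvec: "F.subspace (fvec n)"
  unfolding F.subspace_def fvec_def by auto

definition unit_vec :: "nat \<Rightarrow> nat \<Rightarrow> 'a::comm_ring_1" where
  "unit_vec j = (\<lambda>i. if i = j then 1 else 0)"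

lemma unit_vec_in_fvec: "j < n \<Longrightarrow> unit_vec j \<in> fvec n"
  by (auto simp: unit_vec_def fvec_def)

lemma lmap_unit_vec_eq: "c \<in> fvec n \<Longrightarrow> lmap fscale n unit_vec c = c"
  by (auto simp: lmap_def sum_fun_apply unit_vec_def fvec_def if_distrib cong: if_cong)

lemma lmap_cong: "(\<And>i. i < n \<Longrightarrow> g i = g' i) \<Longrightarrow> lmap sc n g c = lmap sc n g' c"
  unfolding lmap_def by (rule sum.cong) auto

lemma lmap_in_fvec: "(\<And>i. i < n \<Longrightarrow> b i \<in> fvec k) \<Longrightarrow> lmap fscale n b c \<in> fvec k"
  unfolding lmap_def by (intro F.subspace_sum[OF subspace_fvec] F.subspace_scale[OF subspace_fvec]) auto

lemma ex_lmap_preimages: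
  assumes "\<And>i. i < n \<Longrightarrow> y i \<in> lmap sc k h ` fvec k"
  shows "\<exists>b. \<forall>i<n. b i \<in> fvec k \<and> lmap sc k h (b i) = y i"
proof -
  have "\<forall>i\<in>{..<n}. \<exists>c. c \<in> fvec k \<and> lmap sc k h c = y i"
    using assms by (metis imageE lessThan_iff)
  then show ?thesis
    using bchoice[of "{..<n}"] by (metis lessThan_iff)
qed

context module
begin

lemma mspan_eq_span: "mspan scale = span"
  by (rule ext) (simp add: mspan_def span_explicit)

lemma module_hom_lmap: "module_hom fscale scale (lmap scale n g)"
  unfolding module_hom_iff
  using F.module_axioms module_axioms
  by (auto simp: lmap_def scale_left_distrib sum.distrib scale_sum_right)

lemma lmap_unit_vec: "j < n \<Longrightarrow> lmap scale n g (unit_vec j) = g j"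
proof -
  assume "j < n"
  have "lmap scale n g (unit_vec j) = (\<Sum>i<n. if i = j then g i else 0)"
    unfolding lmap_def unit_vec_def by (rule sum.cong) auto
  with \<open>j < n\<close> show ?thesis
    by simp
qed

lemma module_hom_lmap_eq:
  assumes "module_hom fscale scale f"
  shows "f (lmap fscale n b c) = lmap scale n (\<lambda>i. f (b i)) c"
  unfolding lmap_def by (simp add: module_hom.sum[OF assms] module_hom.scale[OF assms])

lemma lmap_lmap_eq:
  assumes "\<And>i. i < n \<Longrightarrow> lmap scale k h (b i) = y i"
  shows "lmap scale k h (lmap fscale n b c) = lmap scale n y c"
  unfolding module_hom_lmap_eq[OF module_hom_lmap] by (rule lmap_cong) (use assms in blast)

lemma lmap_add: "lmap scale n (\<lambda>i. g i + g' i) c = lmap scale n g c + lmap scale n g' c"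
  unfolding lmap_def by (simp add: scale_right_distrib sum.distrib)

lemma lmap_scale: "lmap scale n (\<lambda>i. s *s g i) c = s *s lmap scale n g c"
  unfolding lmap_def by (simp add: scale_sum_right mult.commute)

lemma lmap_in_span: "lmap scale n g c \<in> span (g ` {..<n})"
  unfolding lmap_def by (intro span_sum span_scale span_base) auto

lemma subspace_lker: "F.subspace (lker scale n g)"
proof -
  interpret module_hom fscale scale "lmap scale n g"
    by (rule module_hom_lmap)
  have "lker scale n g = fvec n \<inter> {c. lmap scale n g c = 0}"
    unfolding lker_def by auto
  then show ?thesis
    using F.subspace_inter[OF subspace_fvec subspace_kernel] by simp
qed

lemma lmap_image_fvec: "lmap scale n g ` fvec n = span (g ` {..<n})"
proof
  interpret module_hom fscale scale "lmap scale n g"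
    by (rule module_hom_lmap)
  show "span (g ` {..<n}) \<subseteq> lmap scale n g ` fvec n"
  proof (rule span_minimal)
    show "g ` {..<n} \<subseteq> lmap scale n g ` fvec n"
    proof (rule image_subsetI)
      fix j assume "j \<in> {..<n}"
      then show "g j \<in> lmap scale n g ` fvec n"
        by (metis image_eqI lessThan_iff lmap_unit_vec unit_vec_in_fvec)
    qed
  qed (rule subspace_image[OF subspace_fvec])
qed (use lmap_in_span in auto)

lemma fin_gen_imp_lmap_onto:
  assumes "fin_gen scale N"
  obtains k h where "\<And>j. j < k \<Longrightarrow> h j \<in> N" "lmap scale k h ` fvec k = N"
proof -
  obtain H where H: "finite H" "H \<subseteq> N" "span H = N"
    using assms unfolding fin_gen_def mspan_eq_span by blast
  obtain k and h :: "nat \<Rightarrow> 'b" where "H = h ` {i. i < k}"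
    using finite_imp_nat_seg_image_inj_on[OF H(1)] by blast
  then have "H = h ` {..<k}"
    by (simp add: lessThan_def)
  show ?thesis
  proof (rule that)
    show "\<And>j. j < k \<Longrightarrow> h j \<in> N"
      using H(2) \<open>H = h ` {..<k}\<close> by blast
    show "lmap scale k h ` fvec k = N"
      using H(3) \<open>H = h ` {..<k}\<close> lmap_image_fvec by simp
  qed
qed

end

lemma fscale_decompose_via_hom:
  assumes "module_hom fscale fscale \<beta>" "c \<in> fvec k"
  shows "fscale s c = lmap fscale k (\<lambda>j. fscale s (unit_vec j) - \<beta> (a j)) c + \<beta> (lmap fscale k a c)"
proof -
  have "fscale s c = lmap fscale k (\<lambda>j. fscale s (unit_vec j)) c"
    using F.lmap_scale[of k s unit_vec c] lmap_unit_vec_eq[OF assms(2)] by simp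
  also have "\<dots> = lmap fscale k (\<lambda>j. (fscale s (unit_vec j) - \<beta> (a j)) + \<beta> (a j)) c"
    by simp
  also have "\<dots> = lmap fscale k (\<lambda>j. fscale s (unit_vec j) - \<beta> (a j)) c + \<beta> (lmap fscale k a c)"
    unfolding F.lmap_add F.module_hom_lmap_eq[OF assms(1)] ..
  finally show ?thesis .
qed

context module
begin

definition S_finite_set_wrt :: "'a \<Rightarrow> 'b set \<Rightarrow> bool" where
  "S_finite_set_wrt t V \<longleftrightarrow> (\<exists>L. finite L \<and> L \<subseteq> V \<and> (\<forall>x\<in>V. t *s x \<in> span L))"

lemma S_finite_wrt_imp_S_finite_set_wrt_UNIV: "S_finite_wrt scale t \<Longrightarrow> S_finite_set_wrt t UNIV"
  unfolding S_finite_wrt_def S_finite_set_wrt_def fin_gen_def mspan_eq_span by blast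

lemma fin_gen_if_S_finite_set_wrt_at_maximal_ideals:
  assumes V: "subspace V"
    and loc: "\<And>m. maximal_ideal m \<Longrightarrow> \<exists>t. t \<notin> m \<and> S_finite_set_wrt t V"
  shows "fin_gen scale V"
proof -
  have "1 \<in> R.span {t. S_finite_set_wrt t V}"
    by (rule one_in_span_if_not_subset_maximal_ideal) (use loc in blast)
  then obtain T u where T: "finite T" "T \<subseteq> {t. S_finite_set_wrt t V}" "(\<Sum>t\<in>T. u t * t) = 1"
    unfolding R.span_explicit by auto
  then have "\<forall>t\<in>T. \<exists>L. finite L \<and> L \<subseteq> V \<and> (\<forall>x\<in>V. t *s x \<in> span L)"
    unfolding S_finite_set_wrt_def by blast
  then have "\<exists>L. \<forall>t\<in>T. finite (L t) \<and> L t \<subseteq> V \<and> (\<forall>x\<in>V. t *s x \<in> span (L t))"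
    by (rule bchoice)
  then obtain L where L: "\<And>t. t \<in> T \<Longrightarrow> finite (L t) \<and> L t \<subseteq> V \<and> (\<forall>x\<in>V. t *s x \<in> span (L t))"
    by metis
  define L' where "L' = (\<Union>t\<in>T. L t)"
  have "x \<in> span L'" if "x \<in> V" for x
  proof -
    have "t *s x \<in> span L'" if "t \<in> T" for t
      using L[OF that] \<open>x \<in> V\<close> span_mono[of "L t" L'] that unfolding L'_def by blast
    then have "u t *s (t *s x) \<in> span L'" if "t \<in> T" for t
      using that by (blast intro: span_scale)
    then have "(\<Sum>t\<in>T. u t *s (t *s x)) \<in> span L'"
      by (rule span_sum)
    moreover have "(\<Sum>t\<in>T. u t *s (t *s x)) = x"
      by (simp add: T(3) flip: scale_sum_left)
    ultimately show ?thesis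
      by simp
  qed
  moreover have "span L' \<subseteq> V"
    by (rule span_minimal[OF _ V]) (use L in \<open>auto simp: L'_def\<close>)
  ultimately have "span L' = V"
    by blast
  moreover have "finite L'" "L' \<subseteq> V"
    using L T(1) unfolding L'_def by auto
  ultimately show ?thesis
    unfolding fin_gen_def mspan_eq_span by blast
qed

(* Schanuel-type comparison: with a j lifting s h j through g and beta lifting g through h,
   every c in the kernel of h satisfies s c = lmap d c + beta (lmap a c), where the
   d j = s e_j - beta (a j) lie in the kernel of h and lmap a c lies in the kernel of g. *)
lemma S_finite_set_wrt_lker_transfer:
  assumes ker: "F.S_finite_set_wrt s (lker scale n g)"
    and g: "\<And>i. i < n \<Longrightarrow> g i \<in> lmap scale k h ` fvec k"
    and h: "\<And>j. j < k \<Longrightarrow> s *s h j \<in> lmap scale n g ` fvec n"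
  shows "F.S_finite_set_wrt (s * s) (lker scale k h)"
proof -
  obtain L where L: "finite L" "L \<subseteq> lker scale n g"
    "\<And>c. c \<in> lker scale n g \<Longrightarrow> fscale s c \<in> F.span L"
    using ker unfolding F.S_finite_set_wrt_def by blast
  obtain a where a: "\<And>j. j < k \<Longrightarrow> a j \<in> fvec n \<and> lmap scale n g (a j) = s *s h j"
    using ex_lmap_preimages[of k "\<lambda>j. s *s h j" scale n g, OF h] by metis
  obtain b where b: "\<And>i. i < n \<Longrightarrow> b i \<in> fvec k \<and> lmap scale k h (b i) = g i"
    using ex_lmap_preimages[of n g scale k h, OF g] by metis
  define \<beta> where "\<beta> = lmap fscale n b"
  interpret \<beta>: module_hom fscale fscale \<beta>
    unfolding \<beta>_def by (rule F.module_hom_lmap)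
  have \<beta>_fvec: "\<beta> v \<in> fvec k" for v
    unfolding \<beta>_def by (rule lmap_in_fvec) (use b in blast)
  have \<beta>_lift: "lmap scale k h (\<beta> v) = lmap scale n g v" for v
    unfolding \<beta>_def by (rule lmap_lmap_eq) (use b in blast)
  define d where "d = (\<lambda>j. fscale s (unit_vec j) - \<beta> (a j))"
  define D where "D = d ` {..<k} \<union> \<beta> ` L"
  have d_lker: "d j \<in> lker scale k h" if "j < k" for j
  proof -
    have "d j \<in> fvec k"
      unfolding d_def using that \<beta>_fvec
      by (intro F.subspace_diff[OF subspace_fvec] F.subspace_scale[OF subspace_fvec] unit_vec_in_fvec)
    moreover have "lmap scale k h (d j) = 0"
      using module_hom.diff[OF module_hom_lmap] module_hom.scale[OF module_hom_lmap]
        \<beta>_lift a that lmap_unit_vec unfolding d_def by simp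
    ultimately show ?thesis
      unfolding lker_def by simp
  qed
  have "fscale (s * s) c \<in> F.span D" if c: "c \<in> lker scale k h" for c
  proof -
    have c_fvec: "c \<in> fvec k" and "lmap scale k h c = 0"
      using c unfolding lker_def by auto
    have "lmap scale n g (lmap fscale k a c) = lmap scale k (\<lambda>j. s *s h j) c"
      by (rule lmap_lmap_eq) (use a in blast)
    also have "\<dots> = 0"
      using \<open>lmap scale k h c = 0\<close> by (simp add: lmap_scale)
    finally have "lmap scale n g (lmap fscale k a c) = 0" .
    then have "lmap fscale k a c \<in> lker scale n g"
      unfolding lker_def using a lmap_in_fvec[of k a n c] by blast
    then have "\<beta> (fscale s (lmap fscale k a c)) \<in> F.span D"
      using L(3) \<beta>.span_image F.span_mono[of "\<beta> ` L" D] unfolding D_def by blast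
    moreover have "fscale s (lmap fscale k d c) \<in> F.span D"
      using F.lmap_in_span F.span_mono[of "d ` {..<k}" D] F.span_scale unfolding D_def by blast
    moreover have "fscale (s * s) c = fscale s (lmap fscale k d c) + \<beta> (fscale s (lmap fscale k a c))"
      using fscale_decompose_via_hom[OF \<beta>.module_hom_axioms c_fvec, of s a]
      by (simp add: d_def F.scale_right_distrib \<beta>.scale flip: F.scale_scale)
    ultimately show ?thesis
      using F.span_add by simp
  qed
  moreover have "finite D" "D \<subseteq> lker scale k h"
    using L(1,2) d_lker \<beta>_lift \<beta>_fvec unfolding D_def lker_def by auto
  ultimately show ?thesis
    unfolding F.S_finite_set_wrt_def by blast
qed

lemma S_finite_set_wrt_lker_if_uS_fin_pres_wrt:
  assumes "uS_fin_pres_wrt scale s N"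
    and h: "\<And>j. j < k \<Longrightarrow> h j \<in> N" "lmap scale k h ` fvec k = N"
  shows "F.S_finite_set_wrt (s * s) (lker scale k h)"
proof -
  obtain n g K where g: "\<And>i. i < n \<Longrightarrow> g i \<in> N" and "fin_gen fscale K" "K \<subseteq> lker scale n g"
    and sK: "\<forall>c\<in>lker scale n g. fscale s c \<in> K" and sN: "\<forall>x\<in>N. s *s x \<in> lmap scale n g ` fvec n"
    using assms(1) unfolding uS_fin_pres_wrt_def by blast
  then have "F.S_finite_set_wrt s (lker scale n g)"
    unfolding fin_gen_def F.mspan_eq_span F.S_finite_set_wrt_def by blast
  then show ?thesis
    using g sN h by (intro S_finite_set_wrt_lker_transfer) auto
qed

lemma coherent_imp_uS_coherent:
  assumes "coherent scale" "1 \<in> S"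
  shows "uS_coherent scale S"
proof -
  have "S_finite_wrt scale 1"
    using assms(1) unfolding coherent_def S_finite_wrt_def by blast
  moreover have "uS_fin_pres_wrt scale 1 N" if N: "fin_gen scale N" for N
  proof -
    obtain n g where "\<forall>i<n. g i \<in> N" "lmap scale n g ` fvec n = N" "fin_gen fscale (lker scale n g)"
      using assms(1) N unfolding coherent_def fin_pres_def by blast
    then show ?thesis
      unfolding uS_fin_pres_wrt_def by (intro exI[of _ n] exI[of _ g] exI[of _ "lker scale n g"]) auto
  qed
  ultimately show ?thesis
    using assms(2) unfolding uS_coherent_def by blast
qed

lemma coherent_if_uS_coherent_at_maximal_ideals:
  assumes loc: "\<And>m. maximal_ideal m \<Longrightarrow> uS_coherent scale (UNIV - m)"
  shows "coherent scale"
proof -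
  have "fin_gen scale UNIV"
  proof (rule fin_gen_if_S_finite_set_wrt_at_maximal_ideals[OF subspace_UNIV])
    fix m :: "'a set"
    assume "maximal_ideal m"
    then obtain s where "s \<notin> m" "S_finite_wrt scale s"
      using loc unfolding uS_coherent_def by blast
    then show "\<exists>t. t \<notin> m \<and> S_finite_set_wrt t UNIV"
      using S_finite_wrt_imp_S_finite_set_wrt_UNIV by blast
  qed
  moreover have "fin_pres scale N" if N: "fin_gen scale N" for N
  proof -
    obtain k h where h: "\<And>j. j < k \<Longrightarrow> h j \<in> N" "lmap scale k h ` fvec k = N"
      using fin_gen_imp_lmap_onto[OF N] by metis
    have "fin_gen fscale (lker scale k h)"
    proof (rule F.fin_gen_if_S_finite_set_wrt_at_maximal_ideals[OF subspace_lker])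
      fix m :: "'a set"
      assume m: "maximal_ideal m"
      then obtain s where s: "s \<notin> m" "uS_fin_pres_wrt scale s N"
        using loc N unfolding uS_coherent_def by blast
      have "s * s \<notin> m"
        using s(1) maximal_ideal_imp_prime_ideal[OF m] unfolding prime_ideal_def by blast
      moreover have "F.S_finite_set_wrt (s * s) (lker scale k h)"
        using s(2) h by (rule S_finite_set_wrt_lker_if_uS_fin_pres_wrt)
      ultimately show "\<exists>t. t \<notin> m \<and> F.S_finite_set_wrt t (lker scale k h)"
        by blast
    qed
    then show ?thesis
      unfolding fin_pres_def using h by blast
  qed
  ultimately show ?thesis
    unfolding coherent_def by blast
qed

end

theorem proposition3p5:
  fixes sc :: "'a::comm_ring_1 \<Rightarrow> 'b::ab_group_add \<Rightarrow> 'b"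
  assumes "module sc"
  shows "(coherent sc \<longleftrightarrow> (\<forall>P. prime_ideal P \<longrightarrow> uS_coherent sc (UNIV - P)))
       \<and> (coherent sc \<longleftrightarrow> (\<forall>m. maximal_ideal m \<longrightarrow> uS_coherent sc (UNIV - m)))"
proof -
  have "uS_coherent sc (UNIV - P)" if "coherent sc" "prime_ideal P" for P
    by (simp add: module.coherent_imp_uS_coherent[OF assms] one_notin_prime_ideal that)
  moreover have "\<forall>m. maximal_ideal m \<longrightarrow> uS_coherent sc (UNIV - m)"
    if "\<forall>P. prime_ideal P \<longrightarrow> uS_coherent sc (UNIV - P)"
    using that maximal_ideal_imp_prime_ideal by blast
  ultimately show ?thesis
    using module.coherent_if_uS_coherent_at_maximal_ideals[OF assms] by blast
qed

end
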